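(* Let $\rho_\mathcal{A}$ be an antisymmetric state on $\mathbb{C}^d\otimes\mathbb{C}^d$ and let $p^\textrm{PPT}(\rho_\mathcal{A})$ be the optimal value of the semidefinite program: maximize $\operatorname{Tr}(P_\mathcal{A}\sigma)$ over $\sigma$ subject to $P_\mathcal{A}\sigma P_\mathcal{A} = \operatorname{Tr}(P_\mathcal{A}\sigma)\rho_\mathcal{A}$, $\sigma\geq 0$, $\operatorname{Tr}(\sigma)=1$, $\sigma^\Gamma\geq 0$. If $p^\textrm{PPT}(\rho_\mathcal{A})<1/2$, then any optimal state $\sigma^*$ of this program (a PPT state with $P_\mathcal{A}\sigma^*P_\mathcal{A}=p^\textrm{PPT}(\rho_\mathcal{A})\rho_\mathcal{A}$) is entangled, hence PPT entangled.
   Context: $V$ is the swap operator on $\mathbb{C}^d\otimes\mathbb{C}^d$, $P_\mathcal{A}=(\mathbb{1}-V)/2$ is the projector onto the antisymmetric subspace (with $\mathbb{1}$ the identity operator). An antisymmetric state satisfies $\rho_\mathcal{A}=P_\mathcal{A}\rho_\mathcal{A}P_\mathcal{A}$. A state is separable if it is of the form $\sum_k q_k |\alpha_k\rangle\langle\alpha_k|\otimes|\beta_k\rangle\langle\beta_k|$; $\sigma^\Gamma$ is the partial transpose. *)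

theory Defs
  imports "HOL-Analysis.Analysis"
begin

text \<open>Operators on C^d \<otimes> C^d are represented as matrices indexed by pairs
  (i,j) of a finite type 'd (the basis |i> \<otimes> |j>).\<close>

type_synonym 'd op2 = "complex ^ ('d \<times> 'd) ^ ('d \<times> 'd)"

definition tr :: "complex ^ 'n ^ 'n \<Rightarrow> complex" where
  "tr A = (\<Sum>i\<in>UNIV. A $ i $ i)"

definition smult_mat :: "complex \<Rightarrow> complex ^ 'n ^ 'm \<Rightarrow> complex ^ 'n ^ 'm" where
  "smult_mat c A = (\<chi> i j. c * A $ i $ j)"

definition hermitian :: "complex ^ 'n ^ 'n \<Rightarrow> bool" where
  "hermitian A \<longleftrightarrow> (\<forall>i j. A $ i $ j = cnj (A $ j $ i))"

definition psd :: "complex ^ 'n ^ 'n \<Rightarrow> bool" where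
  "psd A \<longleftrightarrow> hermitian A \<and>
     (\<forall>x :: complex ^ 'n. 0 \<le> Re (\<Sum>i\<in>UNIV. \<Sum>j\<in>UNIV. cnj (x $ i) * A $ i $ j * x $ j))"

definition is_state :: "complex ^ 'n ^ 'n \<Rightarrow> bool" where
  "is_state A \<longleftrightarrow> psd A \<and> tr A = 1"

definition swap_op :: "('d::finite) op2" where
  "swap_op = (\<chi> r c. if fst r = snd c \<and> snd r = fst c then 1 else 0)"

definition P_A :: "('d::finite) op2" where
  "P_A = smult_mat (1/2) (mat 1 - swap_op)"

definition antisymmetric_state :: "('d::finite) op2 \<Rightarrow> bool" where
  "antisymmetric_state \<rho> \<longleftrightarrow> is_state \<rho> \<and> \<rho> = P_A ** \<rho> ** P_A"

text \<open>Partial transpose on the second factor.\<close>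
definition partial_transpose :: "('d::finite) op2 \<Rightarrow> 'd op2" where
  "partial_transpose \<sigma> = (\<chi> r c. \<sigma> $ (fst r, snd c) $ (fst c, snd r))"

definition PPT :: "('d::finite) op2 \<Rightarrow> bool" where
  "PPT \<sigma> \<longleftrightarrow> psd (partial_transpose \<sigma>)"

definition prod_proj :: "complex ^ 'd \<Rightarrow> complex ^ 'd \<Rightarrow> ('d::finite) op2" where
  "prod_proj a b = (\<chi> r c. a $ fst r * cnj (a $ fst c) * (b $ snd r * cnj (b $ snd c)))"

definition separable :: "('d::finite) op2 \<Rightarrow> bool" where
  "separable \<sigma> \<longleftrightarrow> (\<exists>n::nat. \<exists>q :: nat \<Rightarrow> real. \<exists>\<alpha> \<beta> :: nat \<Rightarrow> complex ^ 'd.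
      (\<forall>k<n. q k \<ge> 0 \<and> norm (\<alpha> k) = 1 \<and> norm (\<beta> k) = 1) \<and> (\<Sum>k<n. q k) = 1 \<and>
      \<sigma> = (\<Sum>k<n. smult_mat (complex_of_real (q k)) (prod_proj (\<alpha> k) (\<beta> k))))"

definition entangled :: "('d::finite) op2 \<Rightarrow> bool" where
  "entangled \<sigma> \<longleftrightarrow> is_state \<sigma> \<and> \<not> separable \<sigma>"

definition ppt_feasible :: "('d::finite) op2 \<Rightarrow> 'd op2 \<Rightarrow> bool" where
  "ppt_feasible \<rho> \<sigma> \<longleftrightarrow>
     P_A ** \<sigma> ** P_A = smult_mat (tr (P_A ** \<sigma>)) \<rho> \<and>
     psd \<sigma> \<and> tr \<sigma> = 1 \<and> psd (partial_transpose \<sigma>)"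

text \<open>Optimal value p^PPT(\<rho>) (the objective Tr(P_A \<sigma>) is real on feasible \<sigma>).\<close>
definition p_PPT :: "('d::finite) op2 \<Rightarrow> real" where
  "p_PPT \<rho> = Sup {Re (tr (P_A ** \<sigma>)) | \<sigma>. ppt_feasible \<rho> \<sigma>}"

end

theory Submission
  imports Defs
begin

text \<open>The value of the program is positive: adding a large multiple of 1 + V to \<rho> gives a PPT
  operator, because the partial transpose of 1 + V is 1 + |\<Phi>><\<Phi>| with \<Phi> = \<Sum>a. |a a> and so
  dominates the identity, while P_A (1 + V) = 0 keeps the antisymmetric part equal to \<rho>.

  Suppose an optimal \<sigma> were separable, \<sigma> = \<Sum>k. q k |\<alpha> k \<otimes> \<beta> k><\<alpha> k \<otimes> \<beta> k|. Replacing each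
  \<beta> k by its component \<gamma> k orthogonal to \<alpha> k changes the product vectors only by multiples of the
  symmetric vectors \<alpha> k \<otimes> \<alpha> k, which P_A annihilates. The resulting operator \<sigma>' is still PPT
  and has the same antisymmetric part as \<sigma>; but since \<alpha> k \<otimes> \<gamma> k is orthogonal to its swap
  \<gamma> k \<otimes> \<alpha> k, exactly half of the trace of \<sigma>' lies in the antisymmetric subspace. Normalising \<sigma>'
  gives a feasible point of value 1/2, so p_PPT \<rho> \<ge> 1/2.\<close>

lemma sum_swap_UNIV: "(\<Sum>r\<in>UNIV. f (prod.swap r)) = (\<Sum>r\<in>UNIV. f r)"
  by (rule sum.reindex_bij_witness[of _ prod.swap prod.swap]) auto

lemma tr_add: "tr (A + B) = tr A + tr B"
  by (simp add: tr_def sum.distrib)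

lemma tr_smult_mat: "tr (smult_mat a A) = a * tr A"
  by (simp add: tr_def smult_mat_def sum_distrib_left)

lemma tr_mult_commute: "tr (A ** B) = tr (B ** A)"
  unfolding tr_def matrix_matrix_mult_def vec_lambda_beta
  by (subst sum.swap) (simp add: mult.commute)

lemma smult_mat_add: "smult_mat a (A + B) = smult_mat a A + smult_mat a B"
  by (simp add: smult_mat_def vec_eq_iff distrib_left)

lemma smult_mat_smult_mat: "smult_mat a (smult_mat b A) = smult_mat (a * b) A"
  by (simp add: smult_mat_def vec_eq_iff mult.assoc)

lemma matrix_mult_smult_mat_left: "smult_mat a A ** B = smult_mat a (A ** B)"
  by (simp add: vec_eq_iff smult_mat_def matrix_matrix_mult_def sum_distrib_left mult.assoc)

lemma matrix_mult_smult_mat_right: "A ** smult_mat a B = smult_mat a (A ** B)"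
  by (simp add: vec_eq_iff smult_mat_def matrix_matrix_mult_def sum_distrib_left mult.left_commute)

lemma partial_transpose_add:
  "partial_transpose (A + B) = partial_transpose A + partial_transpose B"
  by (simp add: partial_transpose_def vec_eq_iff)

lemma partial_transpose_smult_mat:
  "partial_transpose (smult_mat a A) = smult_mat a (partial_transpose A)"
  by (simp add: partial_transpose_def smult_mat_def vec_eq_iff)

lemma partial_transpose_mat_1: "partial_transpose (mat 1 :: ('d::finite) op2) = mat 1"
  by (auto simp: partial_transpose_def mat_def vec_eq_iff prod_eq_iff)

lemma hermitian_add:
  assumes "hermitian A" "hermitian B"
  shows "hermitian (A + B)"
  unfolding hermitian_def
proof (intro allI)
  fix i j
  have "A $ i $ j = cnj (A $ j $ i)" "B $ i $ j = cnj (B $ j $ i)"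
    using assms unfolding hermitian_def by blast+
  then show "(A + B) $ i $ j = cnj ((A + B) $ j $ i)"
    by simp
qed

lemma hermitian_partial_transpose:
  assumes "hermitian (A :: ('d::finite) op2)"
  shows "hermitian (partial_transpose A)"
  using assms unfolding hermitian_def partial_transpose_def vec_lambda_beta by blast

section \<open>The swap operator and the antisymmetric projector\<close>

lemma swap_op_entry: "(swap_op :: ('d::finite) op2) $ r $ c = (if c = prod.swap r then 1 else 0)"
  by (cases r; cases c) (auto simp: swap_op_def)

lemma P_A_entry:
  "(P_A :: ('d::finite) op2) $ r $ c
     = ((if c = r then 1 else 0) - (if c = prod.swap r then 1 else 0)) / 2"
  by (simp add: P_A_def smult_mat_def mat_def swap_op_entry)

lemma P_A_mult_entry:
  fixes X :: "complex ^ 'n ^ ('d::finite \<times> 'd)"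
  shows "(P_A ** X) $ r $ c = (X $ r $ c - X $ prod.swap r $ c) / 2"
proof -
  have "(P_A ** X) $ r $ c
      = (\<Sum>k\<in>UNIV. (if k = r then X $ k $ c else 0) - (if k = prod.swap r then X $ k $ c else 0)) / 2"
    unfolding matrix_matrix_mult_def vec_lambda_beta P_A_entry sum_divide_distrib
    by (intro sum.cong) auto
  then show ?thesis
    by (simp add: sum_subtractf)
qed

lemma mult_P_A_entry:
  fixes X :: "complex ^ ('d::finite \<times> 'd) ^ 'm"
  shows "(X ** P_A) $ r $ c = (X $ r $ c - X $ r $ prod.swap c) / 2"
proof -
  have "(X ** P_A) $ r $ c
      = (\<Sum>k\<in>UNIV. (if k = c then X $ r $ k else 0) - (if k = prod.swap c then X $ r $ k else 0)) / 2"
    unfolding matrix_matrix_mult_def vec_lambda_beta P_A_entry sum_divide_distrib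
    by (intro sum.cong) auto
  then show ?thesis
    by (simp add: sum_subtractf)
qed

lemma P_A_sandwich_entry:
  "((P_A :: ('d::finite) op2) ** X ** P_A) $ r $ c
     = (X $ r $ c - X $ prod.swap r $ c - X $ r $ prod.swap c + X $ prod.swap r $ prod.swap c) / 4"
  by (simp add: mult_P_A_entry P_A_mult_entry field_simps)

lemma P_A_swap_row: "(P_A :: ('d::finite) op2) $ prod.swap r $ c = - P_A $ r $ c"
  by (auto simp: P_A_entry)

lemma P_A_idem: "(P_A :: ('d::finite) op2) ** P_A = P_A"
  by (simp add: vec_eq_iff P_A_mult_entry P_A_swap_row)

lemma tr_P_A_mult:
  "tr ((P_A :: ('d::finite) op2) ** X) = (tr X - (\<Sum>r\<in>UNIV. X $ prod.swap r $ r)) / 2"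
  by (simp add: tr_def P_A_mult_entry sum_subtractf sum_divide_distrib[symmetric])

lemma tr_P_A_sandwich: "tr ((P_A :: ('d::finite) op2) ** (P_A ** X ** P_A)) = tr (P_A ** X)"
proof -
  have "tr (P_A ** (P_A ** X ** P_A)) = tr (P_A ** X ** P_A ** P_A)"
    by (rule tr_mult_commute)
  also have "\<dots> = tr (P_A ** X ** P_A)"
    by (simp add: P_A_idem flip: matrix_mul_assoc)
  also have "\<dots> = tr (P_A ** (P_A ** X))"
    by (rule tr_mult_commute)
  finally show ?thesis
    by (simp add: P_A_idem matrix_mul_assoc)
qed

lemma tr_P_A_antisymmetric:
  assumes "(\<rho> :: ('d::finite) op2) = P_A ** \<rho> ** P_A"
  shows "tr (P_A ** \<rho>) = tr \<rho>"
proof -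
  have "P_A ** \<rho> = (P_A ** P_A) ** \<rho> ** P_A"
    by (subst assms) (simp add: matrix_mul_assoc)
  then show ?thesis
    using assms by (simp add: P_A_idem)
qed

lemma mat_1_add_swap_op_entry:
  "(mat 1 + swap_op :: ('d::finite) op2) $ r $ c
     = (if c = r then 1 else 0) + (if c = prod.swap r then 1 else 0)"
  by (simp add: swap_op_entry mat_def eq_commute)

lemma P_A_mult_mat_1_add_swap_op: "(P_A :: ('d::finite) op2) ** (mat 1 + swap_op) = 0"
proof -
  have "(mat 1 + swap_op :: 'd op2) $ prod.swap r $ c = (mat 1 + swap_op) $ r $ c" for r c
    unfolding mat_1_add_swap_op_entry by (simp add: add.commute)
  then show ?thesis
    by (simp add: vec_eq_iff P_A_mult_entry)
qed

section \<open>Positive semidefinite matrices\<close>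

definition quad_form :: "complex ^ 'n ^ 'n \<Rightarrow> complex ^ 'n \<Rightarrow> complex" where
  "quad_form A x = (\<Sum>i\<in>UNIV. \<Sum>j\<in>UNIV. cnj (x $ i) * A $ i $ j * x $ j)"

lemma psd_iff_quad_form: "psd A \<longleftrightarrow> hermitian A \<and> (\<forall>x. 0 \<le> Re (quad_form A x))"
  by (simp add: psd_def quad_form_def)

lemma quad_form_add: "quad_form (A + B) x = quad_form A x + quad_form B x"
  by (simp add: quad_form_def distrib_left distrib_right sum.distrib)

lemma quad_form_smult_mat: "quad_form (smult_mat a A) x = a * quad_form A x"
  by (simp add: quad_form_def smult_mat_def sum_distrib_left mult_ac)

lemma quad_form_mat_1: "quad_form (mat 1) x = of_real (\<Sum>i\<in>UNIV. (cmod (x $ i))\<^sup>2)"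
proof -
  have "quad_form (mat 1) x = (\<Sum>i\<in>UNIV. cnj (x $ i) * x $ i)"
    unfolding quad_form_def mat_def vec_lambda_beta
    by (intro sum.cong) (auto simp: if_distrib if_distribR cong: if_cong)
  also have "\<dots> = (\<Sum>i\<in>UNIV. complex_of_real ((cmod (x $ i))\<^sup>2))"
    by (metis complex_norm_square mult.commute)
  finally show ?thesis
    by simp
qed

lemma sum_sum_indicator_entry:
  "(\<Sum>a\<in>UNIV. \<Sum>b\<in>UNIV. cnj (if a = i then 1 else 0) * A $ a $ b * (if b = j then 1 else 0))
     = A $ i $ j"
proof -
  have "cnj (if a = i then 1 else 0) * A $ a $ b * (if b = j then 1 else 0)
      = (if b = j then if a = i then A $ a $ b else 0 else 0)" for a b
    by simp
  then show ?thesis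
    by simp
qed

lemma psd_add:
  assumes "psd A" "psd B"
  shows "psd (A + B)"
  using assms by (simp add: psd_iff_quad_form quad_form_add hermitian_add)

lemma psd_smult_mat:
  assumes "psd A" "0 \<le> c"
  shows "psd (smult_mat (complex_of_real c) A)"
proof -
  have "hermitian (smult_mat (complex_of_real c) A)"
    unfolding hermitian_def
  proof (intro allI)
    fix i j
    have "A $ i $ j = cnj (A $ j $ i)"
      using assms unfolding psd_def hermitian_def by blast
    then show "smult_mat (complex_of_real c) A $ i $ j
        = cnj (smult_mat (complex_of_real c) A $ j $ i)"
      by (simp add: smult_mat_def)
  qed
  then show ?thesis
    using assms by (simp add: psd_iff_quad_form quad_form_smult_mat)
qed

lemma psd_diag:
  assumes "psd A"
  shows "A $ i $ i = complex_of_real (Re (A $ i $ i))" and "0 \<le> Re (A $ i $ i)"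
proof -
  have "A $ i $ i = cnj (A $ i $ i)"
    using assms unfolding psd_def hermitian_def by blast
  then show "A $ i $ i = complex_of_real (Re (A $ i $ i))"
    by (simp add: complex_eq_iff)
  have "quad_form A (axis i 1) = A $ i $ i"
    by (simp add: quad_form_def axis_def sum_sum_indicator_entry)
  then show "0 \<le> Re (A $ i $ i)"
    using assms by (metis psd_iff_quad_form)
qed

lemma psd_tr:
  assumes "psd A"
  shows "tr A = complex_of_real (Re (tr A))" and "0 \<le> Re (tr A)"
  using psd_diag[OF assms] by (simp_all add: tr_def sum_nonneg)

lemma psd_Re_offdiag_lower:
  assumes "psd A"
  shows "- (Re (A $ i $ i) + Re (A $ j $ j)) / 2 \<le> Re (A $ i $ j)"
proof -
  have "quad_form A (axis i 1 + axis j 1) = A $ i $ i + A $ i $ j + A $ j $ i + A $ j $ j"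
    by (simp add: quad_form_def axis_def distrib_left distrib_right sum.distrib
        sum_sum_indicator_entry)
  moreover have "A $ j $ i = cnj (A $ i $ j)"
    using assms unfolding psd_def hermitian_def by blast
  moreover have "0 \<le> Re (quad_form A (axis i 1 + axis j 1))"
    using assms by (simp add: psd_iff_quad_form)
  ultimately show ?thesis
    by simp
qed

lemma Re_cnj_mult_ge: "- ((cmod a)\<^sup>2 + (cmod b)\<^sup>2) / 2 \<le> Re (cnj a * b)"
proof -
  have "0 \<le> (Re a + Re b)\<^sup>2 + (Im a + Im b)\<^sup>2"
    by simp
  then show ?thesis
    unfolding cmod_power2 by (simp add: power2_eq_square algebra_simps)
qed

lemma quad_form_lower_bound:
  fixes A :: "complex ^ ('n::finite) ^ 'n"
  shows "- (\<Sum>i\<in>UNIV. \<Sum>j\<in>UNIV. cmod (A $ i $ j)) * (\<Sum>i\<in>UNIV. (cmod (x $ i))\<^sup>2) \<le> Re (quad_form A x)"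
proof -
  define N where "N = (\<Sum>i\<in>UNIV. (cmod (x $ i))\<^sup>2)"
  have "- (cmod (A $ i $ j) * N) \<le> Re (cnj (x $ i) * (A $ i $ j * x $ j))" for i j
  proof -
    have "(cmod (x $ i))\<^sup>2 \<le> N" "(cmod (x $ j))\<^sup>2 \<le> N"
      unfolding N_def by (auto intro: member_le_sum)
    moreover have "2 * (cmod (x $ i) * cmod (x $ j)) \<le> (cmod (x $ i))\<^sup>2 + (cmod (x $ j))\<^sup>2"
      using sum_squares_bound[of "cmod (x $ i)" "cmod (x $ j)"] by (simp add: power2_eq_square)
    ultimately have "cmod (A $ i $ j) * (cmod (x $ i) * cmod (x $ j)) \<le> cmod (A $ i $ j) * N"
      by (intro mult_left_mono) simp_all
    moreover have "\<bar>Re (cnj (x $ i) * (A $ i $ j * x $ j))\<bar>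
        \<le> cmod (A $ i $ j) * (cmod (x $ i) * cmod (x $ j))"
      using abs_Re_le_cmod[of "cnj (x $ i) * (A $ i $ j * x $ j)"] by (simp add: norm_mult mult_ac)
    ultimately show ?thesis
      by linarith
  qed
  then have "(\<Sum>i\<in>UNIV. \<Sum>j\<in>UNIV. - (cmod (A $ i $ j) * N)) \<le> Re (quad_form A x)"
    unfolding quad_form_def by (simp add: sum_mono mult.assoc)
  then show ?thesis
    unfolding N_def by (simp add: sum_distrib_right sum_negf)
qed

lemma psd_add_smult_mat_1:
  fixes A :: "complex ^ ('n::finite) ^ 'n"
  assumes "hermitian A" and "(\<Sum>i\<in>UNIV. \<Sum>j\<in>UNIV. cmod (A $ i $ j)) \<le> K"
  shows "psd (A + smult_mat (complex_of_real K) (mat 1))"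
proof -
  have "hermitian (smult_mat (complex_of_real K) (mat 1 :: complex ^ 'n ^ 'n))"
    by (simp add: hermitian_def smult_mat_def mat_def)
  then have "hermitian (A + smult_mat (complex_of_real K) (mat 1))"
    using assms(1) by (rule hermitian_add[rotated])
  moreover have "0 \<le> Re (quad_form (A + smult_mat (complex_of_real K) (mat 1)) x)" for x
  proof -
    define N where "N = (\<Sum>i\<in>UNIV. (cmod (x $ i))\<^sup>2)"
    have "0 \<le> N"
      unfolding N_def by (simp add: sum_nonneg)
    then have "- (\<Sum>i\<in>UNIV. \<Sum>j\<in>UNIV. cmod (A $ i $ j)) * N + K * N \<ge> 0"
      using assms(2) by (simp add: mult_right_mono flip: distrib_right)
    then show ?thesis
      using quad_form_lower_bound[of A x]
      by (simp add: quad_form_add quad_form_smult_mat quad_form_mat_1 N_def)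
  qed
  ultimately show ?thesis
    by (simp add: psd_iff_quad_form)
qed

definition mixture :: "'k set \<Rightarrow> ('k \<Rightarrow> real) \<Rightarrow> ('k \<Rightarrow> 'n \<Rightarrow> complex) \<Rightarrow> complex ^ 'n ^ 'n" where
  "mixture K q w = (\<chi> r c. \<Sum>k\<in>K. complex_of_real (q k) * (w k r * cnj (w k c)))"

lemma quad_form_mixture:
  "quad_form (mixture K q w) x
     = complex_of_real (\<Sum>k\<in>K. q k * (cmod (\<Sum>i\<in>UNIV. cnj (x $ i) * w k i))\<^sup>2)"
proof -
  define s where "s k = (\<Sum>i\<in>UNIV. cnj (x $ i) * w k i)" for k
  define t where "t k i j = complex_of_real (q k) * ((cnj (x $ i) * w k i) * (x $ j * cnj (w k j)))"
    for k i j
  have "quad_form (mixture K q w) x = (\<Sum>i\<in>UNIV. \<Sum>j\<in>UNIV. \<Sum>k\<in>K. t k i j)"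
    unfolding quad_form_def mixture_def t_def
    by (simp add: sum_distrib_left sum_distrib_right mult_ac)
  also have "\<dots> = (\<Sum>i\<in>UNIV. \<Sum>k\<in>K. \<Sum>j\<in>UNIV. t k i j)"
    by (rule sum.cong[OF refl], rule sum.swap)
  also have "\<dots> = (\<Sum>k\<in>K. \<Sum>i\<in>UNIV. \<Sum>j\<in>UNIV. t k i j)"
    by (rule sum.swap)
  also have "\<dots> = (\<Sum>k\<in>K. complex_of_real (q k) * (s k * cnj (s k)))"
  proof (rule sum.cong[OF refl])
    fix k
    have "s k * cnj (s k) = (\<Sum>i\<in>UNIV. \<Sum>j\<in>UNIV. (cnj (x $ i) * w k i) * (x $ j * cnj (w k j)))"
      unfolding s_def cnj_sum by (simp add: sum_product)
    then show "(\<Sum>i\<in>UNIV. \<Sum>j\<in>UNIV. t k i j) = complex_of_real (q k) * (s k * cnj (s k))"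
      unfolding t_def by (simp only: sum_distrib_left)
  qed
  also have "\<dots> = complex_of_real (\<Sum>k\<in>K. q k * (cmod (s k))\<^sup>2)"
    by (simp add: complex_norm_square[symmetric])
  finally show ?thesis
    unfolding s_def .
qed

lemma psd_mixture:
  assumes "\<And>k. k \<in> K \<Longrightarrow> 0 \<le> q k"
  shows "psd (mixture K q w)"
proof -
  have "hermitian (mixture K q w)"
    unfolding hermitian_def mixture_def by (simp add: mult.commute)
  then show ?thesis
    using assms by (simp add: psd_iff_quad_form quad_form_mixture sum_nonneg)
qed

lemma psd_mat_1_add_swap_op: "psd (mat 1 + swap_op :: ('d::finite) op2)"
proof -
  have "hermitian (mat 1 + swap_op :: 'd op2)"
    unfolding hermitian_def mat_1_add_swap_op_entry
  proof (intro allI)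
    fix r c :: "'d \<times> 'd"
    have "c = prod.swap r \<longleftrightarrow> r = prod.swap c"
      by auto
    then show "(if c = r then 1 else 0) + (if c = prod.swap r then 1 else 0)
        = cnj ((if r = c then 1 else 0) + (if r = prod.swap c then 1 else (0::complex)))"
      by simp
  qed
  moreover have "0 \<le> Re (quad_form (mat 1 + swap_op :: 'd op2) x)" for x
  proof -
    have "cnj (x $ r) * swap_op $ r $ c * x $ c
        = (if c = prod.swap r then cnj (x $ r) * x $ c else 0)"
      for r c by (simp add: swap_op_entry)
    then have "quad_form swap_op x = (\<Sum>r\<in>UNIV. cnj (x $ r) * x $ prod.swap r)"
      by (simp add: quad_form_def)
    then have "quad_form (mat 1 + swap_op) x
        = quad_form (mat 1) x + (\<Sum>r\<in>UNIV. cnj (x $ r) * x $ prod.swap r)"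
      by (simp add: quad_form_add)
    moreover have "- (\<Sum>r\<in>UNIV. (cmod (x $ r))\<^sup>2) \<le> (\<Sum>r\<in>UNIV. Re (cnj (x $ r) * x $ prod.swap r))"
    proof -
      have "(\<Sum>r\<in>UNIV. - ((cmod (x $ r))\<^sup>2 + (cmod (x $ prod.swap r))\<^sup>2) / 2)
          \<le> (\<Sum>r\<in>UNIV. Re (cnj (x $ r) * x $ prod.swap r))"
        by (intro sum_mono Re_cnj_mult_ge)
      moreover have "(\<Sum>r\<in>UNIV. (cmod (x $ prod.swap r))\<^sup>2) = (\<Sum>r\<in>UNIV. (cmod (x $ r))\<^sup>2)"
        by (rule sum_swap_UNIV)
      then have "(\<Sum>r\<in>UNIV. - ((cmod (x $ r))\<^sup>2 + (cmod (x $ prod.swap r))\<^sup>2) / 2)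
          = - (\<Sum>r\<in>UNIV. (cmod (x $ r))\<^sup>2)"
        by (simp add: sum_subtractf sum_negf flip: sum_divide_distrib)
      ultimately show ?thesis
        by linarith
    qed
    ultimately show ?thesis
      by (simp add: quad_form_mat_1)
  qed
  ultimately show ?thesis
    by (simp add: psd_iff_quad_form)
qed

lemma partial_transpose_swap_op:
  "partial_transpose (swap_op :: ('d::finite) op2)
     = mixture {()} (\<lambda>_. 1) (\<lambda>_ r. if fst r = snd r then 1 else 0)"
  by (auto simp: partial_transpose_def swap_op_def mixture_def vec_eq_iff)

lemma psd_partial_transpose_add_swap_op:
  fixes \<rho> :: "('d::finite) op2"
  assumes "hermitian \<rho>" and "(\<Sum>r\<in>UNIV. \<Sum>c\<in>UNIV. cmod (partial_transpose \<rho> $ r $ c)) \<le> K"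
  shows "psd (partial_transpose (\<rho> + smult_mat (complex_of_real K) (mat 1 + swap_op)))"
proof -
  have "0 \<le> K"
    using assms(2) by (smt (verit) norm_ge_zero sum_nonneg)
  have "partial_transpose (\<rho> + smult_mat (complex_of_real K) (mat 1 + swap_op))
      = (partial_transpose \<rho> + smult_mat (complex_of_real K) (mat 1))
        + smult_mat (complex_of_real K)
            (mixture {()} (\<lambda>_. 1) (\<lambda>_ r. if fst r = snd r then 1 else 0))"
    unfolding partial_transpose_add partial_transpose_smult_mat
      partial_transpose_mat_1 partial_transpose_swap_op smult_mat_add
    by (simp only: add.assoc)
  moreover have "psd (partial_transpose \<rho> + smult_mat (complex_of_real K) (mat 1))"
    using assms by (intro psd_add_smult_mat_1 hermitian_partial_transpose)
  ultimately show ?thesis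
    using \<open>0 \<le> K\<close> by (simp add: psd_add psd_smult_mat psd_mixture)
qed

section \<open>The PPT program\<close>

lemma Re_tr_P_A_mult_le:
  assumes "psd (\<sigma> :: ('d::finite) op2)"
  shows "Re (tr (P_A ** \<sigma>)) \<le> Re (tr \<sigma>)"
proof -
  have "- (\<Sum>r\<in>UNIV. Re (\<sigma> $ prod.swap r $ r))
      \<le> (\<Sum>r\<in>UNIV. (Re (\<sigma> $ prod.swap r $ prod.swap r) + Re (\<sigma> $ r $ r)) / 2)"
    unfolding sum_negf[symmetric]
  proof (intro sum_mono)
    fix r :: "'d \<times> 'd"
    show "- Re (\<sigma> $ prod.swap r $ r) \<le> (Re (\<sigma> $ prod.swap r $ prod.swap r) + Re (\<sigma> $ r $ r)) / 2"
      using psd_Re_offdiag_lower[OF assms, of "prod.swap r" r] by linarith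
  qed
  also have "\<dots> = Re (tr \<sigma>)"
    by (simp add: tr_def sum.distrib sum_divide_distrib[symmetric]
        sum_swap_UNIV[of "\<lambda>r. Re (\<sigma> $ r $ r)"])
  finally have "- (\<Sum>r\<in>UNIV. Re (\<sigma> $ prod.swap r $ r)) \<le> Re (tr \<sigma>)" .
  moreover have "Re (tr (P_A ** \<sigma>)) = (Re (tr \<sigma>) - (\<Sum>r\<in>UNIV. Re (\<sigma> $ prod.swap r $ r))) / 2"
    by (simp add: tr_P_A_mult)
  ultimately show ?thesis
    by (simp add: field_simps)
qed

lemma ppt_feasible_le_p_PPT:
  assumes "ppt_feasible \<rho> (\<sigma> :: ('d::finite) op2)"
  shows "Re (tr (P_A ** \<sigma>)) \<le> p_PPT \<rho>"
  unfolding p_PPT_def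
proof (rule cSup_upper)
  show "Re (tr (P_A ** \<sigma>)) \<in> {Re (tr (P_A ** \<sigma>)) |\<sigma>. ppt_feasible \<rho> \<sigma>}"
    using assms by blast
  have "Re (tr (P_A ** \<sigma>')) \<le> 1" if "ppt_feasible \<rho> \<sigma>'" for \<sigma>' :: "'d op2"
    using that Re_tr_P_A_mult_le unfolding ppt_feasible_def by fastforce
  then show "bdd_above {Re (tr (P_A ** \<sigma>)) |\<sigma>. ppt_feasible \<rho> (\<sigma> :: 'd op2)}"
    by (intro bdd_aboveI[where M = 1]) blast
qed

lemma p_PPT_ge_normalised:
  fixes \<rho> \<sigma> :: "('d::finite) op2"
  assumes "psd \<sigma>" "psd (partial_transpose \<sigma>)"
    and "P_A ** \<sigma> ** P_A = smult_mat (tr (P_A ** \<sigma>)) \<rho>"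
    and "tr \<sigma> = complex_of_real \<tau>" "0 < \<tau>"
  shows "Re (tr (P_A ** \<sigma>)) / \<tau> \<le> p_PPT \<rho>"
proof -
  define \<sigma>' where "\<sigma>' = smult_mat (complex_of_real (1 / \<tau>)) \<sigma>"
  have scaled_value: "tr (P_A ** \<sigma>') = complex_of_real (1 / \<tau>) * tr (P_A ** \<sigma>)"
    by (simp add: \<sigma>'_def matrix_mult_smult_mat_right tr_smult_mat)
  have "ppt_feasible \<rho> \<sigma>'"
    unfolding ppt_feasible_def
  proof (intro conjI)
    show "P_A ** \<sigma>' ** P_A = smult_mat (tr (P_A ** \<sigma>')) \<rho>"
      unfolding scaled_value
      by (simp add: \<sigma>'_def matrix_mult_smult_mat_left matrix_mult_smult_mat_right
          assms(3) smult_mat_smult_mat)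
    show "psd \<sigma>'" "psd (partial_transpose \<sigma>')"
      unfolding \<sigma>'_def partial_transpose_smult_mat
      by (intro psd_smult_mat assms(1,2); use assms(5) in simp)+
    show "tr \<sigma>' = 1"
      using assms(4,5) by (simp add: \<sigma>'_def tr_smult_mat)
  qed
  then show ?thesis
    using ppt_feasible_le_p_PPT scaled_value by fastforce
qed

lemma p_PPT_pos:
  assumes "antisymmetric_state (\<rho> :: ('d::finite) op2)"
  shows "0 < p_PPT \<rho>"
proof -
  have psd_\<rho>: "psd \<rho>" and tr_\<rho>: "tr \<rho> = 1" and anti: "\<rho> = P_A ** \<rho> ** P_A"
    using assms unfolding antisymmetric_state_def is_state_def by auto
  define S :: "'d op2" where "S = mat 1 + swap_op"
  define K where "K = (\<Sum>r\<in>UNIV. \<Sum>c\<in>UNIV. cmod (partial_transpose \<rho> $ r $ c))"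
  define \<sigma> where "\<sigma> = \<rho> + smult_mat (complex_of_real K) S"
  have psd_S: "psd S"
    unfolding S_def by (rule psd_mat_1_add_swap_op)
  have "0 \<le> K"
    unfolding K_def by (simp add: sum_nonneg)
  have psd_\<sigma>: "psd \<sigma>"
    unfolding \<sigma>_def using psd_\<rho> psd_S \<open>0 \<le> K\<close> by (rule psd_add[OF _ psd_smult_mat])
  have ppt_\<sigma>: "psd (partial_transpose \<sigma>)"
    using psd_\<rho> unfolding \<sigma>_def S_def K_def
    by (intro psd_partial_transpose_add_swap_op) (simp_all add: psd_def)
  have "P_A ** \<sigma> = P_A ** \<rho>"
  proof -
    have "P_A ** S = 0"
      unfolding S_def by (rule P_A_mult_mat_1_add_swap_op)
    then show ?thesis
      unfolding \<sigma>_def matrix_add_ldistrib matrix_mult_smult_mat_right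
      by (simp add: smult_mat_def zero_vec_def)
  qed
  moreover have value_\<sigma>: "tr (P_A ** \<sigma>) = 1"
    using calculation tr_P_A_antisymmetric[OF anti] tr_\<rho> by simp
  ultimately have sandwich_\<sigma>: "P_A ** \<sigma> ** P_A = smult_mat (tr (P_A ** \<sigma>)) \<rho>"
    by (simp add: smult_mat_def flip: anti)
  define \<tau> where "\<tau> = 1 + K * Re (tr S)"
  have "tr \<sigma> = 1 + complex_of_real K * tr S"
    by (simp add: \<sigma>_def tr_add tr_smult_mat tr_\<rho>)
  also have "tr S = complex_of_real (Re (tr S))"
    by (rule psd_tr(1)[OF psd_S])
  finally have tr_\<sigma>: "tr \<sigma> = complex_of_real \<tau>"
    by (simp add: \<tau>_def)
  have "1 \<le> \<tau>"
    using psd_tr(2)[OF psd_S] \<open>0 \<le> K\<close> by (simp add: \<tau>_def)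
  have "1 / \<tau> \<le> p_PPT \<rho>"
    using p_PPT_ge_normalised[OF psd_\<sigma> ppt_\<sigma> sandwich_\<sigma> tr_\<sigma>] \<open>1 \<le> \<tau>\<close> value_\<sigma> by simp
  then show ?thesis
    using \<open>1 \<le> \<tau>\<close> by (smt (verit) divide_pos_pos)
qed

section \<open>Separable states\<close>

definition tensor :: "complex ^ 'a \<Rightarrow> complex ^ 'b \<Rightarrow> 'a \<times> 'b \<Rightarrow> complex" where
  "tensor a b r = a $ fst r * b $ snd r"

lemma sum_cnj_mult_self: "(\<Sum>i\<in>UNIV. cnj (a $ i) * a $ i) = complex_of_real ((norm a)\<^sup>2)"
proof -
  have "cnj (a $ i) * a $ i = complex_of_real ((cmod (a $ i))\<^sup>2)" for i
    by (metis complex_norm_square mult.commute of_real_power)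
  then show ?thesis
    by (simp add: norm_vec_def L2_set_def sum_nonneg)
qed

lemma separable_imp_mixture:
  assumes "separable (\<sigma> :: ('d::finite) op2)"
  obtains n q and \<alpha> \<beta> :: "nat \<Rightarrow> complex ^ 'd"
  where "\<And>k. k < n \<Longrightarrow> 0 \<le> q k \<and> norm (\<alpha> k) = 1"
    and "\<sigma> = mixture {..<n} q (\<lambda>k. tensor (\<alpha> k) (\<beta> k))"
proof -
  obtain n q and \<alpha> \<beta> :: "nat \<Rightarrow> complex ^ 'd"
    where "\<And>k. k < n \<Longrightarrow> 0 \<le> q k \<and> norm (\<alpha> k) = 1"
      and "\<sigma> = (\<Sum>k<n. smult_mat (complex_of_real (q k)) (prod_proj (\<alpha> k) (\<beta> k)))"
    using assms unfolding separable_def by blast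
  moreover have "(\<Sum>k<n. smult_mat (complex_of_real (q k)) (prod_proj (\<alpha> k) (\<beta> k)))
      = mixture {..<n} q (\<lambda>k. tensor (\<alpha> k) (\<beta> k))"
    by (simp add: vec_eq_iff smult_mat_def prod_proj_def mixture_def tensor_def mult_ac)
  ultimately show ?thesis
    using that by metis
qed

lemma partial_transpose_mixture_tensor:
  "partial_transpose (mixture K q (\<lambda>k. tensor (a k) (b k)))
     = mixture K q (\<lambda>k. tensor (a k) (\<chi> i. cnj (b k $ i)))"
  by (simp add: vec_eq_iff partial_transpose_def mixture_def tensor_def mult_ac)

lemma P_A_sandwich_mixture:
  "(P_A :: ('d::finite) op2) ** mixture K q w ** P_A
     = mixture K (\<lambda>k. q k / 4) (\<lambda>k r. w k r - w k (prod.swap r))"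
  unfolding vec_eq_iff
proof (intro allI)
  fix r c :: "'d \<times> 'd"
  have "(P_A ** mixture K q w ** P_A) $ r $ c
      = (\<Sum>k\<in>K. (complex_of_real (q k) * (w k r * cnj (w k c))
          - complex_of_real (q k) * (w k (prod.swap r) * cnj (w k c))
          - complex_of_real (q k) * (w k r * cnj (w k (prod.swap c)))
          + complex_of_real (q k) * (w k (prod.swap r) * cnj (w k (prod.swap c)))) / 4)"
    by (simp add: P_A_sandwich_entry mixture_def sum_subtractf sum.distrib flip: sum_divide_distrib)
  also have "\<dots> = mixture K (\<lambda>k. q k / 4) (\<lambda>k r. w k r - w k (prod.swap r)) $ r $ c"
    unfolding mixture_def vec_lambda_beta by (intro sum.cong refl) (simp add: field_simps)
  finally show "(P_A ** mixture K q w ** P_A) $ r $ c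
      = mixture K (\<lambda>k. q k / 4) (\<lambda>k r. w k r - w k (prod.swap r)) $ r $ c" .
qed

lemma sum_tensor_swap:
  "(\<Sum>r\<in>UNIV. tensor a b (prod.swap r) * cnj (tensor a b r))
     = (\<Sum>i\<in>UNIV. cnj (a $ i) * b $ i) * (\<Sum>j\<in>UNIV. a $ j * cnj (b $ j))"
proof -
  have "(\<Sum>r\<in>UNIV. tensor a b (prod.swap r) * cnj (tensor a b r))
      = (\<Sum>i\<in>UNIV. \<Sum>j\<in>UNIV. (cnj (a $ i) * b $ i) * (a $ j * cnj (b $ j)))"
    unfolding sum.cartesian_product UNIV_Times_UNIV[symmetric]
    by (simp add: tensor_def case_prod_beta mult_ac)
  then show ?thesis
    by (simp add: sum_product)
qed

lemma tr_P_A_mixture_tensor: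
  fixes a b :: "'k \<Rightarrow> complex ^ ('d::finite)"
  assumes "\<And>k. k \<in> K \<Longrightarrow> (\<Sum>i\<in>UNIV. cnj (a k $ i) * b k $ i) = 0"
  shows "2 * tr (P_A ** mixture K q (\<lambda>k. tensor (a k) (b k)))
      = tr (mixture K q (\<lambda>k. tensor (a k) (b k)))"
proof -
  let ?M = "mixture K q (\<lambda>k. tensor (a k) (b k))"
  have "(\<Sum>r\<in>UNIV. ?M $ prod.swap r $ r)
      = (\<Sum>k\<in>K. complex_of_real (q k)
          * (\<Sum>r\<in>UNIV. tensor (a k) (b k) (prod.swap r) * cnj (tensor (a k) (b k) r)))"
    unfolding mixture_def vec_lambda_beta sum_distrib_left by (rule sum.swap)
  also have "\<dots> = 0"
    using assms by (simp add: sum_tensor_swap)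
  finally show ?thesis
    by (simp add: tr_P_A_mult)
qed

lemma separable_sandwich_witness:
  assumes "separable (\<sigma> :: ('d::finite) op2)"
  obtains \<sigma>' where "psd \<sigma>'" and "psd (partial_transpose \<sigma>')"
    and "P_A ** \<sigma>' ** P_A = P_A ** \<sigma> ** P_A" and "2 * tr (P_A ** \<sigma>') = tr \<sigma>'"
proof -
  obtain n q and \<alpha> \<beta> :: "nat \<Rightarrow> complex ^ 'd"
    where unit: "\<And>k. k < n \<Longrightarrow> 0 \<le> q k \<and> norm (\<alpha> k) = 1"
      and \<sigma>_eq: "\<sigma> = mixture {..<n} q (\<lambda>k. tensor (\<alpha> k) (\<beta> k))"
    using separable_imp_mixture[OF assms] by blast
  define c where "c k = (\<Sum>j\<in>UNIV. cnj (\<alpha> k $ j) * \<beta> k $ j)" for k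
  define \<gamma> where "\<gamma> k = (\<chi> i. \<beta> k $ i - c k * \<alpha> k $ i)" for k
  have orthogonal: "(\<Sum>i\<in>UNIV. cnj (\<alpha> k $ i) * \<gamma> k $ i) = 0" if "k \<in> {..<n}" for k
  proof -
    have "cnj (\<alpha> k $ i) * \<gamma> k $ i = cnj (\<alpha> k $ i) * \<beta> k $ i - c k * (cnj (\<alpha> k $ i) * \<alpha> k $ i)" for i
      by (simp add: \<gamma>_def algebra_simps)
    then have "(\<Sum>i\<in>UNIV. cnj (\<alpha> k $ i) * \<gamma> k $ i) = c k - c k * (\<Sum>i\<in>UNIV. cnj (\<alpha> k $ i) * \<alpha> k $ i)"
      by (simp add: c_def sum_subtractf sum_distrib_left)
    then show ?thesis
      using unit[of k] that by (simp add: sum_cnj_mult_self)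
  qed
  have "tensor (\<alpha> k) (\<gamma> k) r - tensor (\<alpha> k) (\<gamma> k) (prod.swap r)
      = tensor (\<alpha> k) (\<beta> k) r - tensor (\<alpha> k) (\<beta> k) (prod.swap r)" for k r
    by (simp add: tensor_def \<gamma>_def algebra_simps)
  then have "P_A ** mixture {..<n} q (\<lambda>k. tensor (\<alpha> k) (\<gamma> k)) ** P_A = P_A ** \<sigma> ** P_A"
    by (simp add: \<sigma>_eq P_A_sandwich_mixture)
  moreover have "psd (mixture {..<n} q (\<lambda>k. tensor (\<alpha> k) (\<gamma> k)))"
    and "psd (partial_transpose (mixture {..<n} q (\<lambda>k. tensor (\<alpha> k) (\<gamma> k))))"
    using unit by (auto simp: partial_transpose_mixture_tensor intro!: psd_mixture)
  moreover have "2 * tr (P_A ** mixture {..<n} q (\<lambda>k. tensor (\<alpha> k) (\<gamma> k)))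
      = tr (mixture {..<n} q (\<lambda>k. tensor (\<alpha> k) (\<gamma> k)))"
    using orthogonal by (rule tr_P_A_mixture_tensor)
  ultimately show ?thesis
    using that by blast
qed

lemma p_PPT_ge_half_if_separable:
  fixes \<rho> \<sigma> :: "('d::finite) op2"
  assumes feasible: "ppt_feasible \<rho> \<sigma>" and "separable \<sigma>"
    and positive: "0 < Re (tr (P_A ** \<sigma>))"
  shows "1 / 2 \<le> p_PPT \<rho>"
proof -
  obtain \<sigma>' where psd_\<sigma>': "psd \<sigma>'" and ppt_\<sigma>': "psd (partial_transpose \<sigma>')"
    and same_sandwich: "P_A ** \<sigma>' ** P_A = P_A ** \<sigma> ** P_A" and half: "2 * tr (P_A ** \<sigma>') = tr \<sigma>'"
    using separable_sandwich_witness[OF \<open>separable \<sigma>\<close>] by blast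
  have same_value: "tr (P_A ** \<sigma>') = tr (P_A ** \<sigma>)"
    by (metis same_sandwich tr_P_A_sandwich)
  define \<tau> where "\<tau> = Re (tr \<sigma>')"
  have tr_\<sigma>': "tr \<sigma>' = complex_of_real \<tau>"
    unfolding \<tau>_def by (rule psd_tr(1)[OF psd_\<sigma>'])
  have \<tau>_eq: "\<tau> = 2 * Re (tr (P_A ** \<sigma>))"
    using half tr_\<sigma>' same_value by (metis Re_complex_of_real mult_2 plus_complex.sel(1))
  have "P_A ** \<sigma>' ** P_A = smult_mat (tr (P_A ** \<sigma>')) \<rho>"
    using feasible same_sandwich same_value by (simp add: ppt_feasible_def)
  from p_PPT_ge_normalised[OF psd_\<sigma>' ppt_\<sigma>' this tr_\<sigma>'] show ?thesis
    using \<tau>_eq same_value positive by simp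
qed

theorem mainTheorem3:
  fixes \<rho> \<sigma> :: "('d::finite) op2"
  assumes "antisymmetric_state \<rho>"
    and "p_PPT \<rho> < 1/2"
    and "ppt_feasible \<rho> \<sigma>"
    and "Re (tr (P_A ** \<sigma>)) = p_PPT \<rho>"
  shows "entangled \<sigma> \<and> PPT \<sigma>"
proof -
  have "0 < Re (tr (P_A ** \<sigma>))"
    using p_PPT_pos[OF assms(1)] assms(4) by simp
  then have "\<not> separable \<sigma>"
    using p_PPT_ge_half_if_separable[OF assms(3)] assms(2) by fastforce
  then show ?thesis
    using assms(3) by (simp add: entangled_def is_state_def PPT_def ppt_feasible_def)
qed

end
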